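(* Consider the unit-cost Correlated Pandora's Problem (all $c_i=1$) in which all volumes are positive even integers. Let $x$ be an optimal solution of the Unit-Cost Convex Program, and run Clairvoyant Stopping with (Discrete-Time) Poisson Rounding built from $x$. Then its expected objective is at most $4\cdot\mathrm{OPT}$ (i.e., it is $4$-competitive).
   Context: Correlated Pandora's Problem: boxes $[n]$, box $i$ has opening cost $c_i$ (here $c_i=1$) and volume $v_i$; the scenario $v=(v_1,\dots,v_n)$ is drawn from a known, possibly correlated distribution $\mathcal{D}$. Opening a box costs its cost and reveals its volume; the objective of an algorithm is total opening cost plus the volume of the taken box, minimized in expectation. A partially adaptive algorithm fixes the opening order in advance and adaptively decides when to stop (then taking the minimum opened volume); $\mathrm{OPT}$ is the minimum expected objective of a partially adaptive algorithm. Write $x_+=\max\{x,0\}$. Unit-Cost Convex Program: variables $x_i(t)\ge 0$ for $i,t\in[n]$ with $\sum_{i\in[n]}x_i(t)\le 1$ for all $t\in[n]$; minimize $\mathbf{E}_{v\sim\mathcal{D}}\sum_{t=1}^\infty\big(1-\sum_{i\in[n]}\sum_{t'\in[n],\,t'<t-v_i}x_i(t')\big)_+$. Discrete-Time Poisson Rounding: let $\bar x_i(t)=\frac1t\sum_{t'=1}^{\min\{t,n\}}x_i(t')$. Independently at each step $\tau=1,2,\dots$, sample box $i$ with probability $\bar x_i(\lceil\tau/2\rceil)$ (no box with the remaining probability); $\alpha_i$ is the first step at which box $i$ is sampled ($\infty$ if never). Clairvoyant Stopping: sample all $\alpha_i$; let $i^*=\arg\min_{i}(\alpha_i+v_i)$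 (computed using the realized volumes); open boxes one per unit time step in ascending order of $\alpha_i$ and take box $i^*$ as soon as it is opened. The objective is the number of boxes opened plus $v_{i^*}$. *)

theory Defs
  imports "HOL-Probability.Probability"
begin

(* Boxes are 0..<n, time steps t of the program are 1..n.
   A scenario is v :: nat => nat (only v i, i<n, matter). *)

definition valid_order :: "nat \<Rightarrow> nat list \<Rightarrow> bool" where
  "valid_order n \<sigma> \<longleftrightarrow> distinct \<sigma> \<and> set \<sigma> = {..<n}"

(* stop v = number of boxes opened (>= 1, since a box must be taken);
   the decision to stop after k boxes depends only on the first k revealed volumes *)
definition valid_stop :: "nat \<Rightarrow> nat list \<Rightarrow> ((nat \<Rightarrow> nat) \<Rightarrow> nat) \<Rightarrow> bool" where
  "valid_stop n \<sigma> stop \<longleftrightarrow>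
     (\<forall>v. 1 \<le> stop v \<and> stop v \<le> n) \<and>
     (\<forall>v w k. (\<forall>j<k. v (\<sigma> ! j) = w (\<sigma> ! j)) \<longrightarrow> stop v \<le> k \<longrightarrow> stop w = stop v)"

definition pa_cost :: "nat list \<Rightarrow> ((nat \<Rightarrow> nat) \<Rightarrow> nat) \<Rightarrow> (nat \<Rightarrow> nat) \<Rightarrow> nat" where
  "pa_cost \<sigma> stop v = stop v + Min ((\<lambda>j. v (\<sigma> ! j)) ` {..<stop v})"

definition OPT :: "nat \<Rightarrow> (nat \<Rightarrow> nat) pmf \<Rightarrow> ennreal" where
  "OPT n D = (INF p \<in> {(\<sigma>, stop). valid_order n \<sigma> \<and> valid_stop n \<sigma> stop}.
       \<integral>\<^sup>+ v. ennreal (real (pa_cost (fst p) (snd p) v)) \<partial>measure_pmf D)"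

definition cp_feasible :: "nat \<Rightarrow> (nat \<Rightarrow> nat \<Rightarrow> real) \<Rightarrow> bool" where
  "cp_feasible n x \<longleftrightarrow> (\<forall>i<n. \<forall>t\<in>{1..n}. 0 \<le> x i t) \<and> (\<forall>t\<in>{1..n}. (\<Sum>i<n. x i t) \<le> 1)"

definition cp_term :: "nat \<Rightarrow> (nat \<Rightarrow> nat \<Rightarrow> real) \<Rightarrow> (nat \<Rightarrow> nat) \<Rightarrow> nat \<Rightarrow> real" where
  "cp_term n x v t = max 0 (1 - (\<Sum>i<n. \<Sum>t'\<in>{1..n}.
       if real t' < real t - real (v i) then x i t' else 0))"

definition cp_obj :: "nat \<Rightarrow> (nat \<Rightarrow> nat) pmf \<Rightarrow> (nat \<Rightarrow> nat \<Rightarrow> real) \<Rightarrow> ennreal" where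
  "cp_obj n D x = (\<integral>\<^sup>+ v. (\<Sum>t. ennreal (cp_term n x v (Suc t))) \<partial>measure_pmf D)"

definition cp_optimal :: "nat \<Rightarrow> (nat \<Rightarrow> nat) pmf \<Rightarrow> (nat \<Rightarrow> nat \<Rightarrow> real) \<Rightarrow> bool" where
  "cp_optimal n D x \<longleftrightarrow> cp_feasible n x \<and> (\<forall>y. cp_feasible n y \<longrightarrow> cp_obj n D x \<le> cp_obj n D y)"

definition xbar :: "nat \<Rightarrow> (nat \<Rightarrow> nat \<Rightarrow> real) \<Rightarrow> nat \<Rightarrow> nat \<Rightarrow> real" where
  "xbar n x i t = (1 / real t) * (\<Sum>t'\<in>{1..min t n}. x i t')"

(* distribution of the sample at step \<tau> (\<tau> >= 1): Some i with prob xbar_i(ceil(\<tau>/2)), None otherwise *)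
definition step_pmf :: "nat \<Rightarrow> (nat \<Rightarrow> nat \<Rightarrow> real) \<Rightarrow> nat \<Rightarrow> nat option pmf" where
  "step_pmf n x \<tau> = embed_pmf (\<lambda>r. case r of
       Some i \<Rightarrow> (if i < n then xbar n x i ((\<tau> + 1) div 2) else 0)
     | None \<Rightarrow> 1 - (\<Sum>i<n. xbar n x i ((\<tau> + 1) div 2)))"

(* \<omega> k is the outcome of step \<tau> = k + 1; steps are independent *)
definition rounding_space :: "nat \<Rightarrow> (nat \<Rightarrow> nat \<Rightarrow> real) \<Rightarrow> (nat \<Rightarrow> nat option) measure" where
  "rounding_space n x = (\<Pi>\<^sub>M k\<in>UNIV. measure_pmf (step_pmf n x (Suc k)))"

definition alpha :: "(nat \<Rightarrow> nat option) \<Rightarrow> nat \<Rightarrow> enat" where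
  "alpha \<omega> i = (if \<exists>k. \<omega> k = Some i then enat (Suc (LEAST k. \<omega> k = Some i)) else \<infinity>)"

(* objective for given volumes v and sampling times a; ties in the arg min are
   resolved adversarially (worst case over all minimisers) *)
definition clairvoyant_cost :: "nat \<Rightarrow> (nat \<Rightarrow> nat) \<Rightarrow> (nat \<Rightarrow> enat) \<Rightarrow> ennreal" where
  "clairvoyant_cost n v a =
     (let m = Min ((\<lambda>i. a i + enat (v i)) ` {..<n}) in
      if m = \<infinity> then \<infinity> else
      (SUP i \<in> {i. i < n \<and> a i + enat (v i) = m}.
          ennreal (real (card {j. j < n \<and> a j < a i} + 1 + v i))))"

definition alg_cost :: "nat \<Rightarrow> (nat \<Rightarrow> nat) pmf \<Rightarrow> (nat \<Rightarrow> nat \<Rightarrow> real) \<Rightarrow> ennreal" where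
  "alg_cost n D x = (\<integral>\<^sup>+ v. \<integral>\<^sup>+ \<omega>. clairvoyant_cost n v (alpha \<omega>) \<partial>rounding_space n x \<partial>measure_pmf D)"

end

theory Submission
  imports Defs
begin

(* The clairvoyant cost is at most T = min_i (alpha_i + v_i), because the boxes opened before the
   chosen one were sampled at distinct earlier steps; so the expected cost is at most the sum over j
   of P(T > j). Box i has completed by time j iff it was sampled during the first j - v_i steps, and
   the steps are independent, so P(T > j) <= exp (- sum_{i,t} x_i(t) R_t(j - v_i)), where R_t(m)
   is the total rate at which the mass x_i(t) is sampled during the first m steps. Since R_t(m)
   grows like 2 ln (m / 2t), the sum over j of exp (- R_t(j - v)) is at most 4t + v.
   Truncating x to the unit of mass with the earliest completion times t + v_i and applying Jensen's
   inequality to exp then bounds the expected cost by 4 times the objective of the convex program in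
   scenario v. Finally, opening the boxes in the order of a partially adaptive algorithm is a feasible
   solution whose objective is at most the cost of the algorithm, so the optimum of the program is at
   most OPT. *)

lemma prod_one_minus_le_exp_neg_sum:
  fixes a :: "'a \<Rightarrow> real"
  assumes "\<And>k. k \<in> K \<Longrightarrow> a k \<le> 1"
  shows "(\<Prod>k\<in>K. 1 - a k) \<le> exp (- (\<Sum>k\<in>K. a k))"
proof (cases "finite K")
  case True
  have "(\<Prod>k\<in>K. 1 - a k) \<le> (\<Prod>k\<in>K. exp (- a k))"
    using assms exp_minus_ge by (intro prod_mono) auto
  also have "\<dots> = exp (- (\<Sum>k\<in>K. a k))"
    using True by (simp add: exp_sum sum_negf[symmetric])
  finally show ?thesis .
qed simp

lemma suminf_ennreal_eq_top_if_bounded_below: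
  fixes f :: "nat \<Rightarrow> real"
  assumes "0 < c" and "\<And>t. c \<le> f t"
  shows "(\<Sum>t. ennreal (f t)) = \<top>"
proof (rule summable_iff_suminf_neq_top)
  show "0 \<le> f t" for t
    using assms by (meson less_le_trans less_imp_le)
  show "\<not> summable f"
  proof
    assume "summable f"
    then have "f \<longlonglongrightarrow> 0"
      by (rule summable_LIMSEQ_zero)
    then have "eventually (\<lambda>t. f t < c) sequentially"
      using assms(1) by (rule order_tendstoD(2))
    then show False
      using assms(2) by (auto simp: eventually_sequentially not_less[symmetric])
  qed
qed

lemma exp_neg_harmonic_le:
  assumes "1 \<le> a" and "a \<le> b"
  shows "exp (- (\<Sum>u\<in>{a..<b}. 1 / real u)) \<le> real a / real b"
  using assms(2)
proof (induction b rule: dec_induct)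
  case base
  then show ?case
    using assms(1) by simp
next
  case (step b)
  have b: "0 < real b"
    using step.hyps assms(1) by simp
  have "1 + 1 / real b \<le> exp (1 / real b)"
    by (rule exp_ge_add_one_self)
  then have last: "exp (- (1 / real b)) \<le> real b / real (Suc b)"
    using b by (simp add: exp_minus field_simps)
  have "exp (- (\<Sum>u\<in>{a..<Suc b}. 1 / real u))
      = exp (- (\<Sum>u\<in>{a..<b}. 1 / real u)) * exp (- (1 / real b))"
    using step.hyps by (simp add: exp_add[symmetric])
  also have "\<dots> \<le> real a / real b * (real b / real (Suc b))"
    using step.IH last by (intro mult_mono) auto
  also have "\<dots> = real a / real (Suc b)"
    using b by simp
  finally show ?case .
qed

lemma square_div_Suc_le_diff:
  fixes a :: real
  assumes "0 < M"
  shows "(a / real (Suc M))\<^sup>2 \<le> a\<^sup>2 / real M - a\<^sup>2 / real (Suc M)"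
proof -
  have "1 / (real (Suc M))\<^sup>2 \<le> 1 / (real M * real (Suc M))"
    using assms by (intro divide_left_mono) (auto simp: power2_eq_square)
  also have "\<dots> = 1 / real M - 1 / real (Suc M)"
    using assms by (simp add: field_simps)
  finally have "a\<^sup>2 * (1 / (real (Suc M))\<^sup>2) \<le> a\<^sup>2 * (1 / real M - 1 / real (Suc M))"
    by (rule mult_left_mono) simp
  then show ?thesis
    by (simp add: power_divide right_diff_distrib)
qed

lemma sum_le_of_inverse_square_tail:
  fixes f :: "nat \<Rightarrow> real"
  assumes "0 < a"
    and le_1: "\<And>m. f m \<le> 1"
    and tail: "\<And>m. a \<le> m \<Longrightarrow> f m \<le> (real a / real (Suc m))\<^sup>2"
  shows "(\<Sum>m<N. f m) \<le> 2 * real a"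
proof -
  have head: "(\<Sum>m<M. f m) \<le> real M" for M
    using sum_mono[of "{..<M}" f "\<lambda>_. 1"] le_1 by simp
  have telescoping: "(\<Sum>m<M. f m) \<le> 2 * real a - (real a)\<^sup>2 / real M" if "a \<le> M" for M
    using that
  proof (induction M rule: dec_induct)
    case base
    show ?case
      using head[of a] assms(1) by (simp add: power2_eq_square)
  next
    case (step M)
    have "0 < M"
      using step.hyps assms(1) by simp
    then show ?case
      using step.IH tail[OF step.hyps(1)] square_div_Suc_le_diff[of M "real a"] by simp
  qed
  show ?thesis
  proof (cases "a \<le> N")
    case True
    have "0 \<le> (real a)\<^sup>2 / real N"
      by simp
    then show ?thesis
      using telescoping[OF True] by linarith
  next
    case False
    then show ?thesis
      using head[of N] by simp
  qed
qed

section \<open>Poisson rounding\<close>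

(* Step k + 1 of the rounding samples box i with probability xbar_i(k div 2 + 1), to which x_i(t)
   contributes x_i(t) / u for every u >= t; cumulative_rate t m adds up these contributions over
   the first m steps. *)
definition cumulative_rate :: "nat \<Rightarrow> nat \<Rightarrow> real" where
  "cumulative_rate t m = (\<Sum>k<m. if t \<le> Suc (k div 2) then 1 / real (Suc (k div 2)) else 0)"

lemma cumulative_rate_nonneg: "0 \<le> cumulative_rate t m"
  unfolding cumulative_rate_def by (intro sum_nonneg) simp

lemma cumulative_rate_0 [simp]: "cumulative_rate t 0 = 0"
  by (simp add: cumulative_rate_def)

lemma cumulative_rate_mono: "m \<le> m' \<Longrightarrow> cumulative_rate t m \<le> cumulative_rate t m'"
  unfolding cumulative_rate_def by (intro sum_mono2) auto

lemma cumulative_rate_even: "cumulative_rate t (2 * e) = 2 * (\<Sum>u\<in>{t..<Suc e}. 1 / real u)"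
proof (induction e)
  case (Suc e)
  have "cumulative_rate t (2 * Suc e)
      = cumulative_rate t (2 * e) + 2 * (if t \<le> Suc e then 1 / real (Suc e) else 0)"
    by (simp add: cumulative_rate_def)
  then show ?case
    using Suc.IH by (simp add: sum.op_ivl_Suc)
qed (simp add: cumulative_rate_def)

lemma exp_neg_cumulative_rate_le:
  assumes "1 \<le> t" and "2 * t \<le> m"
  shows "exp (- cumulative_rate t m) \<le> (real (2 * t) / real (Suc m))\<^sup>2"
proof -
  define e where "e = m div 2"
  have "exp (- cumulative_rate t m) \<le> exp (- cumulative_rate t (2 * e))"
    unfolding e_def by (intro exp_le_cancel_iff[THEN iffD2] le_imp_neg_le cumulative_rate_mono) simp
  also have "\<dots> = (exp (- (\<Sum>u\<in>{t..<Suc e}. 1 / real u)))\<^sup>2"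
    by (simp add: cumulative_rate_even power2_eq_square exp_add[symmetric])
  also have "\<dots> \<le> (real t / real (Suc e))\<^sup>2"
    using assms by (intro power_mono exp_neg_harmonic_le) (auto simp: e_def)
  also have "\<dots> \<le> (real (2 * t) / real (Suc m))\<^sup>2"
  proof (intro power_mono)
    have "Suc m \<le> 2 * Suc e"
      unfolding e_def by presburger
    then have "real (2 * t) / real (2 * Suc e) \<le> real (2 * t) / real (Suc m)"
      by (intro frac_le) auto
    moreover have "real (2 * t) / real (2 * Suc e) = real t / real (Suc e)"
      by (simp add: field_simps)
    ultimately show "real t / real (Suc e) \<le> real (2 * t) / real (Suc m)"
      by simp
  qed simp
  finally show ?thesis .
qed

lemma sum_exp_neg_cumulative_rate_le:
  assumes "1 \<le> t"
  shows "(\<Sum>m<N. exp (- cumulative_rate t m)) \<le> 4 * real t"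
  using sum_le_of_inverse_square_tail[of "2 * t" "\<lambda>m. exp (- cumulative_rate t m)" N]
    exp_neg_cumulative_rate_le[OF assms] cumulative_rate_nonneg assms
  by simp

lemma sum_exp_neg_cumulative_rate_delayed_le:
  assumes "1 \<le> t"
  shows "(\<Sum>j<N. exp (- cumulative_rate t (j - w))) \<le> 4 * real t + real w"
proof (cases "w \<le> N")
  case True
  have "(\<Sum>j<N. exp (- cumulative_rate t (j - w)))
      = (\<Sum>j\<in>{0..<w}. exp (- cumulative_rate t (j - w))) + (\<Sum>j\<in>{w..<N}. exp (- cumulative_rate t (j - w)))"
    using True by (metis atLeast0LessThan sum.atLeastLessThan_concat zero_le)
  also have "(\<Sum>j\<in>{0..<w}. exp (- cumulative_rate t (j - w))) = real w"
    by simp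
  also have "(\<Sum>j\<in>{w..<N}. exp (- cumulative_rate t (j - w))) = (\<Sum>m<N - w. exp (- cumulative_rate t m))"
    using sum.shift_bounds_nat_ivl[of "\<lambda>j. exp (- cumulative_rate t (j - w))" 0 w "N - w"] True
    by (simp add: atLeast0LessThan)
  finally show ?thesis
    using sum_exp_neg_cumulative_rate_le[OF assms, of "N - w"] by simp
next
  case False
  have "(\<Sum>j<N. exp (- cumulative_rate t (j - w))) = real N"
    using False by simp
  then show ?thesis
    using False by simp
qed

lemma xbar_nonneg: "cp_feasible n x \<Longrightarrow> i < n \<Longrightarrow> 0 \<le> xbar n x i u"
  unfolding cp_feasible_def xbar_def by (auto intro!: divide_nonneg_nonneg sum_nonneg)

lemma sum_xbar_le_1:
  assumes "cp_feasible n x"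
  shows "(\<Sum>i<n. xbar n x i u) \<le> 1"
proof (cases "u = 0")
  case False
  have "(\<Sum>i<n. xbar n x i u) = (\<Sum>t\<in>{1..min u n}. \<Sum>i<n. x i t) / real u"
    unfolding xbar_def by (simp add: sum_divide_distrib sum.swap[of _ "{..<n}"])
  also have "\<dots> \<le> (\<Sum>t\<in>{1..min u n}. 1) / real u"
    using assms unfolding cp_feasible_def by (intro divide_right_mono sum_mono) auto
  also have "\<dots> \<le> 1"
    using False by simp
  finally show ?thesis .
qed (simp add: xbar_def)

lemma xbar_eq_sum: "xbar n x i u = (\<Sum>t\<in>{1..n}. x i t * (if t \<le> u then 1 / real u else 0))"
proof -
  have "(\<Sum>t\<in>{1..n}. x i t * (if t \<le> u then 1 / real u else 0)) = (\<Sum>t\<in>{t\<in>{1..n}. t \<le> u}. x i t / real u)"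
    by (subst sum.inter_filter) (auto intro: sum.cong)
  also have "{t\<in>{1..n}. t \<le> u} = {1..min u n}"
    by auto
  finally show ?thesis
    by (simp add: xbar_def sum_divide_distrib)
qed

lemma sum_xbar_over_steps:
  "(\<Sum>k<m. xbar n x i (Suc (k div 2))) = (\<Sum>t\<in>{1..n}. x i t * cumulative_rate t m)"
proof -
  have "(\<Sum>k<m. xbar n x i (Suc (k div 2)))
      = (\<Sum>k<m. \<Sum>t\<in>{1..n}. x i t * (if t \<le> Suc (k div 2) then 1 / real (Suc (k div 2)) else 0))"
    by (simp only: xbar_eq_sum)
  also have "\<dots> = (\<Sum>t\<in>{1..n}. \<Sum>k<m. x i t * (if t \<le> Suc (k div 2) then 1 / real (Suc (k div 2)) else 0))"
    by (rule sum.swap)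
  finally show ?thesis
    by (simp only: cumulative_rate_def sum_distrib_left)
qed

lemma pmf_step_pmf_Some:
  assumes "cp_feasible n x" and "i < n"
  shows "pmf (step_pmf n x \<tau>) (Some i) = xbar n x i ((\<tau> + 1) div 2)"
proof -
  define f where "f r = (case r of
       Some i \<Rightarrow> (if i < n then xbar n x i ((\<tau> + 1) div 2) else 0)
     | None \<Rightarrow> 1 - (\<Sum>i<n. xbar n x i ((\<tau> + 1) div 2)))" for r
  have f_nonneg: "0 \<le> f r" for r
    using xbar_nonneg[OF assms(1)] sum_xbar_le_1[OF assms(1)] by (auto simp: f_def split: option.split)
  have "(\<integral>\<^sup>+r. f r \<partial>count_space UNIV) = (\<Sum>r\<in>insert None (Some ` {..<n}). ennreal (f r))"
    by (rule nn_integral_count_space') (auto simp: f_def split: option.split)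
  also have "\<dots> = ennreal (f None + (\<Sum>i<n. f (Some i)))"
    using f_nonneg by (simp add: sum.reindex sum_nonneg)
  also have "\<dots> = 1"
    by (simp add: f_def)
  finally have "(\<integral>\<^sup>+r. f r \<partial>count_space UNIV) = 1" .
  then show ?thesis
    using f_nonneg assms(2) unfolding step_pmf_def f_def[symmetric] by (simp add: pmf_embed_pmf f_def)
qed

lemma measure_step_pmf_avoid:
  assumes "cp_feasible n x" and "B \<subseteq> {..<n}"
  shows "measure (step_pmf n x \<tau>) (- Some ` B) = 1 - (\<Sum>i\<in>B. xbar n x i ((\<tau> + 1) div 2))"
proof -
  have "finite B"
    using assms(2) finite_subset by blast
  then have "measure (step_pmf n x \<tau>) (Some ` B) = (\<Sum>i\<in>B. xbar n x i ((\<tau> + 1) div 2))"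
    using assms pmf_step_pmf_Some[OF assms(1)]
    by (auto simp: measure_measure_pmf_finite sum.reindex intro!: sum.cong)
  then show ?thesis
    using measure_pmf.prob_compl[of "Some ` B" "step_pmf n x \<tau>"] by (simp add: Compl_eq_Diff_UNIV)
qed

lemma alpha_plus_le_iff:
  "alpha \<omega> i + enat c \<le> enat j \<longleftrightarrow> (\<exists>k. \<omega> k = Some i \<and> Suc k + c \<le> j)"
proof (cases "\<exists>k. \<omega> k = Some i")
  case True
  define L where "L = (LEAST k. \<omega> k = Some i)"
  have L: "\<omega> L = Some i" and L_min: "\<And>k. \<omega> k = Some i \<Longrightarrow> L \<le> k"
    unfolding L_def using True by (auto intro: LeastI_ex Least_le)
  have "alpha \<omega> i = enat (Suc L)"
    using True by (simp add: alpha_def L_def)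
  then show ?thesis
    using L L_min by (auto intro: le_trans[rotated])
qed (simp add: alpha_def)

definition completions_after :: "nat \<Rightarrow> (nat \<Rightarrow> nat) \<Rightarrow> nat \<Rightarrow> (nat \<Rightarrow> nat option) set" where
  "completions_after n v j = {\<omega>. \<forall>i<n. enat j < alpha \<omega> i + enat (v i)}"

lemma completions_after_eq_prod_emb:
  "completions_after n v j = prod_emb UNIV (\<lambda>k. measure_pmf (step_pmf n x (Suc k))) {..<j}
     (\<Pi>\<^sub>E k\<in>{..<j}. - Some ` {i. i < n \<and> Suc k + v i \<le> j})"
proof -
  have "enat j < alpha \<omega> i + enat (v i) \<longleftrightarrow> \<not> (\<exists>k. \<omega> k = Some i \<and> Suc k + v i \<le> j)" for \<omega> i
    using alpha_plus_le_iff[of \<omega> i "v i" j] by (simp add: not_le[symmetric])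
  then show ?thesis
    unfolding completions_after_def prod_emb_def by (fastforce simp: space_PiM)
qed

lemma completions_after_sets: "completions_after n v j \<in> sets (rounding_space n x)"
  unfolding rounding_space_def completions_after_eq_prod_emb[of n v j x] by (rule sets_PiM_I) auto

lemma sum_step_probabilities:
  "(\<Sum>k<j. \<Sum>i | i < n \<and> Suc k + v i \<le> j. xbar n x i (Suc (k div 2)))
     = (\<Sum>(i, t)\<in>{..<n} \<times> {1..n}. x i t * cumulative_rate t (j - v i))"
proof -
  have "(\<Sum>k<j. \<Sum>i | i < n \<and> Suc k + v i \<le> j. xbar n x i (Suc (k div 2)))
      = (\<Sum>k<j. \<Sum>i<n. if Suc k + v i \<le> j then xbar n x i (Suc (k div 2)) else 0)"
    by (simp add: sum.inter_filter[symmetric] conj_commute lessThan_def)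
  also have "\<dots> = (\<Sum>i<n. \<Sum>k<j. if Suc k + v i \<le> j then xbar n x i (Suc (k div 2)) else 0)"
    by (rule sum.swap)
  also have "\<dots> = (\<Sum>i<n. \<Sum>k<j - v i. xbar n x i (Suc (k div 2)))"
  proof (rule sum.cong[OF refl])
    fix i
    have "{k\<in>{..<j}. Suc k + v i \<le> j} = {..<j - v i}"
      by auto
    then show "(\<Sum>k<j. if Suc k + v i \<le> j then xbar n x i (Suc (k div 2)) else 0)
        = (\<Sum>k<j - v i. xbar n x i (Suc (k div 2)))"
      by (simp add: sum.inter_filter[symmetric])
  qed
  also have "\<dots> = (\<Sum>(i, t)\<in>{..<n} \<times> {1..n}. x i t * cumulative_rate t (j - v i))"
    by (simp add: sum_xbar_over_steps sum.cartesian_product)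
  finally show ?thesis .
qed

lemma emeasure_completions_after_le:
  assumes feasible: "cp_feasible n x"
  shows "emeasure (rounding_space n x) (completions_after n v j)
    \<le> ennreal (exp (- (\<Sum>(i, t)\<in>{..<n} \<times> {1..n}. x i t * cumulative_rate t (j - v i))))"
proof -
  define q where "q k = (\<Sum>i | i < n \<and> Suc k + v i \<le> j. xbar n x i (Suc (k div 2)))" for k
  have q_le_1: "q k \<le> 1" for k
  proof -
    have "q k \<le> (\<Sum>i<n. xbar n x i (Suc (k div 2)))"
      unfolding q_def using xbar_nonneg[OF feasible] by (intro sum_mono2) auto
    then show ?thesis
      using sum_xbar_le_1[OF feasible] by (rule order_trans)
  qed
  have "emeasure (rounding_space n x) (completions_after n v j)
      = (\<Prod>k<j. emeasure (step_pmf n x (Suc k)) (- Some ` {i. i < n \<and> Suc k + v i \<le> j}))"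
    unfolding rounding_space_def completions_after_eq_prod_emb[of n v j x]
    by (rule emeasure_PiM_emb) (auto simp: prob_space_measure_pmf)
  also have "\<dots> = (\<Prod>k<j. ennreal (1 - q k))"
    using measure_step_pmf_avoid[OF feasible]
    by (intro prod.cong refl) (simp add: measure_pmf.emeasure_eq_measure q_def subset_eq)
  also have "\<dots> = ennreal (\<Prod>k<j. 1 - q k)"
    using q_le_1 by (intro prod_ennreal) simp
  also have "\<dots> \<le> ennreal (exp (- (\<Sum>k<j. q k)))"
    using q_le_1 by (intro ennreal_leI prod_one_minus_le_exp_neg_sum)
  finally show ?thesis
    unfolding q_def sum_step_probabilities .
qed

section \<open>Clairvoyant stopping\<close>

lemma card_sampled_before_le:
  assumes "alpha \<omega> i = enat a"
  shows "card {j. j < n \<and> alpha \<omega> j < alpha \<omega> i} \<le> a - 1"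
proof -
  have "{j. j < n \<and> alpha \<omega> j < enat a} \<subseteq> (\<lambda>k. the (\<omega> k)) ` {..<a - 1}"
  proof safe
    fix j assume "alpha \<omega> j < enat a"
    then have "alpha \<omega> j + enat 0 \<le> enat (a - 1)"
      by (cases "alpha \<omega> j") auto
    then obtain k where "\<omega> k = Some j" "Suc k \<le> a - 1"
      unfolding alpha_plus_le_iff by auto
    then show "j \<in> (\<lambda>k. the (\<omega> k)) ` {..<a - 1}"
      by (intro image_eqI[of _ _ k]) auto
  qed
  then have "card {j. j < n \<and> alpha \<omega> j < alpha \<omega> i} \<le> card ((\<lambda>k. the (\<omega> k)) ` {..<a - 1})"
    using assms by (intro card_mono) auto
  also have "\<dots> \<le> a - 1"
    using card_image_le[of "{..<a - 1}" "\<lambda>k. the (\<omega> k)"] by simp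
  finally show ?thesis .
qed

lemma clairvoyant_cost_le_count:
  assumes "1 \<le> n"
  shows "clairvoyant_cost n v (alpha \<omega>) \<le> (\<Sum>j. indicator (completions_after n v j) \<omega>)"
proof -
  define m where "m = Min ((\<lambda>i. alpha \<omega> i + enat (v i)) ` {..<n})"
  have after_iff: "\<omega> \<in> completions_after n v j \<longleftrightarrow> enat j < m" for j
    unfolding completions_after_def m_def using assms by (subst Min_gr_iff) (auto simp: lessThan_empty_iff)
  show ?thesis
  proof (cases m)
    case (enat M)
    have "(\<Sum>j. indicator (completions_after n v j) \<omega>) = (\<Sum>j<M. indicator (completions_after n v j) \<omega> :: ennreal)"
      by (rule suminf_finite) (auto simp: after_iff enat)
    also have "\<dots> = ennreal (real M)"
      by (simp add: after_iff enat ennreal_of_nat_eq_real_of_nat)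
    finally have count: "(\<Sum>j. indicator (completions_after n v j) \<omega>) = ennreal (real M)" .
    have bound: "card {j. j < n \<and> alpha \<omega> j < alpha \<omega> i} + 1 + v i \<le> M"
      if i: "i < n" "alpha \<omega> i + enat (v i) = m" for i
    proof -
      obtain a where a: "alpha \<omega> i = enat a"
        using i enat by (cases "alpha \<omega> i") auto
      have "a \<noteq> 0"
        using alpha_plus_le_iff[of \<omega> i 0 0] a by auto
      then show ?thesis
        using card_sampled_before_le[OF a, of n] i a enat by auto
    qed
    have "clairvoyant_cost n v (alpha \<omega>) = (SUP i\<in>{i. i < n \<and> alpha \<omega> i + enat (v i) = m}.
        ennreal (real (card {j. j < n \<and> alpha \<omega> j < alpha \<omega> i} + 1 + v i)))"
      unfolding clairvoyant_cost_def Let_def m_def[symmetric] by (rule if_not_P) (simp add: enat)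
    also have "\<dots> \<le> ennreal (real M)"
      using bound by (intro SUP_least ennreal_leI, unfold of_nat_le_iff) blast
    finally show ?thesis
      unfolding count .
  next
    case infinity
    then show ?thesis
      using suminf_ennreal_eq_top_if_bounded_below[of 1 "\<lambda>_. 1"]
      by (simp add: clairvoyant_cost_def Let_def m_def[symmetric] after_iff)
  qed
qed

section \<open>Truncation to a unit of mass\<close>

(* The term at time t of the convex program in a single scenario v is obtained for P the pairs
   (i, t'), weights w (i, t') = x_i(t') and completion times c (i, t') = t' + v_i; see
   cp_term_eq_uncovered. *)
definition uncovered :: "'a set \<Rightarrow> ('a \<Rightarrow> real) \<Rightarrow> ('a \<Rightarrow> nat) \<Rightarrow> nat \<Rightarrow> real" where
  "uncovered P w c t = max 0 (1 - (\<Sum>p\<in>P. if c p < t then w p else 0))"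

lemma uncovered_nonneg: "0 \<le> uncovered P w c t"
  by (simp add: uncovered_def)

lemma uncovered_le_1: "(\<And>p. p \<in> P \<Longrightarrow> 0 \<le> w p) \<Longrightarrow> uncovered P w c t \<le> 1"
  unfolding uncovered_def by (simp add: sum_nonneg)

lemma uncovered_eq_0:
  assumes "finite P" and "\<And>q. q \<in> P \<Longrightarrow> 0 \<le> w q" and "p \<in> P" "c p < t" "1 \<le> w p"
  shows "uncovered P w c t = 0"
proof -
  have "w p \<le> (\<Sum>q\<in>P. if c q < t then w q else 0)"
    using member_le_sum[of p P "\<lambda>q. if c q < t then w q else 0"] assms by auto
  then show ?thesis
    using assms(5) by (simp add: uncovered_def)
qed

lemma suminf_uncovered_le:
  assumes "finite P" and "\<And>q. q \<in> P \<Longrightarrow> 0 \<le> w q" and "p \<in> P" "1 \<le> w p"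
  shows "(\<Sum>t. ennreal (uncovered P w c (Suc t))) \<le> ennreal (real (c p))"
proof -
  have "(\<Sum>t. ennreal (uncovered P w c (Suc t))) = (\<Sum>t<c p. ennreal (uncovered P w c (Suc t)))"
    using uncovered_eq_0[of P w p c] assms by (intro suminf_finite) auto
  also have "\<dots> \<le> (\<Sum>t<c p. 1)"
    using uncovered_le_1[of P w] assms(2) by (intro sum_mono) simp
  finally show ?thesis
    by (simp add: ennreal_of_nat_eq_real_of_nat)
qed

lemma covered_mass_crosses_1:
  fixes w :: "'a \<Rightarrow> real"
  assumes "finite P" and "1 \<le> sum w P"
  obtains s where "(\<Sum>p\<in>P. if c p < s then w p else 0) < 1"
    and "1 \<le> (\<Sum>p\<in>P. if c p < Suc s then w p else 0)"
proof -
  define X where "X t = (\<Sum>p\<in>P. if c p < t then w p else 0)" for t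
  have "c p < Suc (\<Sum>q\<in>P. c q)" if "p \<in> P" for p
    using member_le_sum[of p P c] assms(1) that by simp
  then have "X (Suc (\<Sum>p\<in>P. c p)) = sum w P"
    unfolding X_def by (intro sum.cong) auto
  moreover have "X 0 = 0"
    by (simp add: X_def)
  ultimately have "\<exists>s. \<not> 1 \<le> X s \<and> 1 \<le> X (Suc s)"
    using ex_least_nat_less[of "\<lambda>t. 1 \<le> X t" "Suc (\<Sum>p\<in>P. c p)"] assms(2) by auto
  then show ?thesis
    using that unfolding X_def by (auto simp: not_le)
qed

lemma unit_truncation_exists:
  assumes "finite P" and w_nonneg: "\<And>p. p \<in> P \<Longrightarrow> 0 \<le> w p" and "1 \<le> sum w P"
  obtains y where "\<And>p. p \<in> P \<Longrightarrow> 0 \<le> y p \<and> y p \<le> w p" and "sum y P = 1"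
    and "\<And>t. (\<Sum>p\<in>P. if t \<le> c p then y p else 0) \<le> uncovered P w c t"
proof -
  define X where "X t = (\<Sum>p\<in>P. if c p < t then w p else 0)" for t
  obtain s where X_s: "X s < 1" and X_Suc_s: "1 \<le> X (Suc s)"
    using covered_mass_crosses_1[OF assms(1,3)] unfolding X_def by blast
  define m where "m = (\<Sum>p\<in>P. if c p = s then w p else 0)"
  have "X (Suc s) = X s + m"
    unfolding X_def m_def sum.distrib[symmetric] by (intro sum.cong) auto
  then have m_pos: "0 < m" and X_s_m: "1 - X s \<le> m"
    using X_s X_Suc_s by linarith+
  define frac where "frac = (1 - X s) / m"
  have frac: "0 \<le> frac" "frac \<le> 1"
    unfolding frac_def using X_s X_s_m m_pos by auto
  define y where "y p = (if c p < s then w p else if c p = s then frac * w p else 0)" for p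
  show ?thesis
  proof
    show "0 \<le> y p \<and> y p \<le> w p" if "p \<in> P" for p
      using w_nonneg[OF that] frac by (auto simp: y_def mult_left_le_one_le)
    have "sum y P = X s + frac * m"
      unfolding y_def X_def m_def sum_distrib_left sum.distrib[symmetric] by (intro sum.cong) auto
    then show y_sum: "sum y P = 1"
      using m_pos by (simp add: frac_def)
    show "(\<Sum>p\<in>P. if t \<le> c p then y p else 0) \<le> uncovered P w c t" for t
    proof (cases "t \<le> s")
      case True
      have "(\<Sum>p\<in>P. if t \<le> c p then y p else 0) + (\<Sum>p\<in>P. if c p < t then y p else 0) = sum y P"
        by (subst sum.distrib[symmetric]) (intro sum.cong, auto)
      moreover have "(\<Sum>p\<in>P. if c p < t then y p else 0) = X t"
        unfolding X_def y_def using True by (intro sum.cong) auto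
      ultimately show ?thesis
        using y_sum by (simp add: uncovered_def X_def)
    next
      case False
      then have "(\<Sum>p\<in>P. if t \<le> c p then y p else 0) = 0"
        unfolding y_def by (intro sum.neutral) auto
      then show ?thesis
        by (simp add: uncovered_nonneg)
    qed
  qed
qed

lemma sum_mult_le_suminf_uncovered:
  assumes "finite P" and y_nonneg: "\<And>p. p \<in> P \<Longrightarrow> 0 \<le> y p"
    and tail: "\<And>t. (\<Sum>p\<in>P. if t \<le> c p then y p else 0) \<le> uncovered P w c t"
  shows "ennreal (\<Sum>p\<in>P. y p * real (c p)) \<le> (\<Sum>t. ennreal (uncovered P w c (Suc t)))"
proof -
  define T where "T = Suc (\<Sum>p\<in>P. c p)"
  have layers: "y p * real (c p) = (\<Sum>t<T. if Suc t \<le> c p then y p else 0)" if "p \<in> P" for p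
  proof -
    have "c p < T"
      unfolding T_def using assms(1) that by (simp add: less_Suc_eq_le member_le_sum)
    then have "{t\<in>{..<T}. Suc t \<le> c p} = {..<c p}"
      by auto
    then show ?thesis
      by (simp add: sum.inter_filter[symmetric])
  qed
  have "(\<Sum>p\<in>P. y p * real (c p)) = (\<Sum>p\<in>P. \<Sum>t<T. if Suc t \<le> c p then y p else 0)"
    using layers by (rule sum.cong[OF refl])
  also have "\<dots> = (\<Sum>t<T. \<Sum>p\<in>P. if Suc t \<le> c p then y p else 0)"
    by (rule sum.swap)
  also have "\<dots> \<le> (\<Sum>t<T. uncovered P w c (Suc t))"
    by (intro sum_mono tail)
  finally have "ennreal (\<Sum>p\<in>P. y p * real (c p)) \<le> (\<Sum>t<T. ennreal (uncovered P w c (Suc t)))"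
    by (simp add: ennreal_leI uncovered_nonneg)
  also have "\<dots> \<le> (\<Sum>t. ennreal (uncovered P w c (Suc t)))"
    by (intro sum_le_suminf summableI) auto
  finally show ?thesis .
qed

lemma exp_neg_sum_le_convex_combination:
  fixes y w g :: "'a \<Rightarrow> real"
  assumes "finite P" and "\<And>p. p \<in> P \<Longrightarrow> 0 \<le> y p \<and> y p \<le> w p" and "sum y P = 1"
    and "\<And>p. p \<in> P \<Longrightarrow> 0 \<le> g p"
  shows "exp (- (\<Sum>p\<in>P. w p * g p)) \<le> (\<Sum>p\<in>P. y p * exp (- g p))"
proof -
  have "P \<noteq> {}"
    using assms(3) by auto
  have "exp (- (\<Sum>p\<in>P. w p * g p)) \<le> exp (\<Sum>p\<in>P. y p *\<^sub>R (- g p))"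
    using assms(2,4) by (simp add: sum_negf[symmetric] sum_mono mult_right_mono)
  also have "\<dots> \<le> (\<Sum>p\<in>P. y p * exp (- g p))"
    using assms(2) by (intro convex_on_sum[OF assms(1) \<open>P \<noteq> {}\<close> exp_convex assms(3)]) auto
  finally show ?thesis .
qed

lemma suminf_exp_neg_le_uncovered:
  fixes C :: real
  assumes "finite P" and "0 < C"
    and w_nonneg: "\<And>p. p \<in> P \<Longrightarrow> 0 \<le> w p"
    and G_nonneg: "\<And>p j. p \<in> P \<Longrightarrow> 0 \<le> G p j"
    and G_sum: "\<And>p N. p \<in> P \<Longrightarrow> (\<Sum>j<N. exp (- G p j)) \<le> C * real (c p)"
  shows "(\<Sum>j. ennreal (exp (- (\<Sum>p\<in>P. w p * G p j))))
    \<le> ennreal C * (\<Sum>t. ennreal (uncovered P w c (Suc t)))"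
proof (cases "1 \<le> sum w P")
  case False
  have "1 - sum w P \<le> uncovered P w c (Suc t)" for t
  proof -
    have "(\<Sum>p\<in>P. if c p < Suc t then w p else 0) \<le> sum w P"
      using w_nonneg by (intro sum_mono) auto
    then show ?thesis
      by (simp add: uncovered_def)
  qed
  then have "(\<Sum>t. ennreal (uncovered P w c (Suc t))) = \<top>"
    using False by (intro suminf_ennreal_eq_top_if_bounded_below[of "1 - sum w P"]) auto
  then show ?thesis
    using \<open>0 < C\<close> by (simp add: ennreal_mult_top)
next
  case True
  obtain y where y: "\<And>p. p \<in> P \<Longrightarrow> 0 \<le> y p \<and> y p \<le> w p" and y_sum: "sum y P = 1"
    and tail: "\<And>t. (\<Sum>p\<in>P. if t \<le> c p then y p else 0) \<le> uncovered P w c t"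
    using unit_truncation_exists[OF assms(1) w_nonneg True] by blast
  have partial: "(\<Sum>j<N. exp (- (\<Sum>p\<in>P. w p * G p j))) \<le> C * (\<Sum>p\<in>P. y p * real (c p))" for N
  proof -
    have "(\<Sum>j<N. exp (- (\<Sum>p\<in>P. w p * G p j))) \<le> (\<Sum>j<N. \<Sum>p\<in>P. y p * exp (- G p j))"
      using y y_sum G_nonneg by (intro sum_mono exp_neg_sum_le_convex_combination[OF assms(1)]) auto
    also have "\<dots> = (\<Sum>p\<in>P. y p * (\<Sum>j<N. exp (- G p j)))"
      unfolding sum_distrib_left by (rule sum.swap)
    also have "\<dots> \<le> (\<Sum>p\<in>P. y p * (C * real (c p)))"
      using y G_sum by (intro sum_mono mult_left_mono) auto
    finally show ?thesis
      by (simp add: sum_distrib_left algebra_simps)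
  qed
  have "(\<Sum>j. ennreal (exp (- (\<Sum>p\<in>P. w p * G p j)))) \<le> ennreal (C * (\<Sum>p\<in>P. y p * real (c p)))"
    using partial by (intro suminf_le_const summableI) (simp add: sum_ennreal ennreal_leI)
  also have "\<dots> = ennreal C * ennreal (\<Sum>p\<in>P. y p * real (c p))"
    using \<open>0 < C\<close> y by (simp add: ennreal_mult sum_nonneg)
  also have "\<dots> \<le> ennreal C * (\<Sum>t. ennreal (uncovered P w c (Suc t)))"
    using sum_mult_le_suminf_uncovered[OF assms(1) _ tail] y by (intro mult_left_mono) auto
  finally show ?thesis .
qed

section \<open>The bound in a single scenario\<close>

lemma cp_term_eq_uncovered:
  "cp_term n x v t = uncovered ({..<n} \<times> {1..n}) (\<lambda>p. x (fst p) (snd p)) (\<lambda>p. snd p + v (fst p)) t"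
  unfolding cp_term_def uncovered_def sum.cartesian_product
  by (intro arg_cong[where f = "\<lambda>s. max 0 (1 - s)"] sum.cong) (auto simp: less_diff_eq split_beta)

lemma expected_clairvoyant_cost_le:
  assumes "1 \<le> n" and feasible: "cp_feasible n x"
  shows "(\<integral>\<^sup>+\<omega>. clairvoyant_cost n v (alpha \<omega>) \<partial>rounding_space n x)
    \<le> 4 * (\<Sum>t. ennreal (cp_term n x v (Suc t)))"
proof -
  let ?P = "{..<n} \<times> {1..n}"
  have "(\<integral>\<^sup>+\<omega>. clairvoyant_cost n v (alpha \<omega>) \<partial>rounding_space n x)
      \<le> (\<integral>\<^sup>+\<omega>. (\<Sum>j. indicator (completions_after n v j) \<omega>) \<partial>rounding_space n x)"
    using assms(1) by (intro nn_integral_mono clairvoyant_cost_le_count)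
  also have "\<dots> = (\<Sum>j. emeasure (rounding_space n x) (completions_after n v j))"
    using borel_measurable_indicator[OF completions_after_sets]
    by (subst nn_integral_suminf) (simp_all add: completions_after_sets)
  also have "\<dots> \<le> (\<Sum>j. ennreal (exp (- (\<Sum>(i, t)\<in>?P. x i t * cumulative_rate t (j - v i)))))"
    by (intro suminf_le summableI emeasure_completions_after_le feasible)
  also have "\<dots> = (\<Sum>j. ennreal (exp (- (\<Sum>p\<in>?P. x (fst p) (snd p) * cumulative_rate (snd p) (j - v (fst p))))))"
    by (simp add: split_beta)
  also have "\<dots> \<le> ennreal 4 * (\<Sum>t. ennreal (uncovered ?P (\<lambda>p. x (fst p) (snd p)) (\<lambda>p. snd p + v (fst p)) (Suc t)))"
  proof (rule suminf_exp_neg_le_uncovered)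
    fix p N assume "p \<in> ?P"
    then show "(\<Sum>j<N. exp (- cumulative_rate (snd p) (j - v (fst p)))) \<le> 4 * real (snd p + v (fst p))"
      using sum_exp_neg_cumulative_rate_delayed_le[of "snd p" "v (fst p)" N] by (auto; linarith)
  qed (use feasible in \<open>auto simp: cp_feasible_def cumulative_rate_nonneg\<close>)
  finally show ?thesis
    by (simp add: cp_term_eq_uncovered)
qed

section \<open>Partially adaptive algorithms\<close>

definition schedule_solution :: "nat list \<Rightarrow> nat \<Rightarrow> nat \<Rightarrow> real" where
  "schedule_solution \<sigma> i t = (if 1 \<le> t \<and> t \<le> length \<sigma> \<and> \<sigma> ! (t - 1) = i then 1 else 0)"

lemma cp_feasible_schedule_solution: "cp_feasible n (schedule_solution \<sigma>)"
proof -
  have nonneg: "0 \<le> schedule_solution \<sigma> i t" for i t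
    by (simp add: schedule_solution_def)
  have sum_le_1: "(\<Sum>i<n. schedule_solution \<sigma> i t) \<le> 1" for t
  proof -
    have "(\<Sum>i<n. schedule_solution \<sigma> i t) \<le> (\<Sum>i<n. if \<sigma> ! (t - 1) = i then 1 else 0)"
      unfolding schedule_solution_def by (intro sum_mono) auto
    also have "\<dots> \<le> 1"
      by (simp add: sum.delta')
    finally show ?thesis .
  qed
  show ?thesis
    unfolding cp_feasible_def using nonneg sum_le_1 by blast
qed

lemma cp_term_schedule_solution_le:
  assumes "valid_order n \<sigma>" and "valid_stop n \<sigma> stop"
  shows "(\<Sum>t. ennreal (cp_term n (schedule_solution \<sigma>) v (Suc t))) \<le> ennreal (real (pa_cost \<sigma> stop v))"
proof -
  have len: "length \<sigma> = n" and set: "set \<sigma> = {..<n}"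
    using assms(1) distinct_card[of \<sigma>] by (auto simp: valid_order_def)
  have stop: "1 \<le> stop v" "stop v \<le> n"
    using assms(2) by (auto simp: valid_stop_def)
  then have "Min ((\<lambda>j. v (\<sigma> ! j)) ` {..<stop v}) \<in> (\<lambda>j. v (\<sigma> ! j)) ` {..<stop v}"
    by (intro Min_in) (auto simp: lessThan_empty_iff)
  then obtain j where j: "j < stop v" and j_min: "v (\<sigma> ! j) = Min ((\<lambda>j. v (\<sigma> ! j)) ` {..<stop v})"
    by auto
  let ?p = "(\<sigma> ! j, Suc j)"
  have "?p \<in> {..<n} \<times> {1..n}"
    using j stop len set nth_mem[of j \<sigma>] by auto
  moreover have "schedule_solution \<sigma> (\<sigma> ! j) (Suc j) = 1"
    using j stop len by (simp add: schedule_solution_def)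
  ultimately have "(\<Sum>t. ennreal (cp_term n (schedule_solution \<sigma>) v (Suc t)))
      \<le> ennreal (real (snd ?p + v (fst ?p)))"
    unfolding cp_term_eq_uncovered
    by (intro suminf_uncovered_le) (auto simp: schedule_solution_def)
  also have "\<dots> \<le> ennreal (real (pa_cost \<sigma> stop v))"
    using j j_min by (intro ennreal_leI) (simp add: pa_cost_def)
  finally show ?thesis .
qed

lemma cp_obj_le_OPT:
  assumes "cp_optimal n D x"
  shows "cp_obj n D x \<le> OPT n D"
  unfolding OPT_def
proof (rule INF_greatest, clarify)
  fix \<sigma> stop assume "valid_order n \<sigma>" "valid_stop n \<sigma> stop"
  have "cp_obj n D x \<le> cp_obj n D (schedule_solution \<sigma>)"
    using assms cp_feasible_schedule_solution unfolding cp_optimal_def by blast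
  also have "\<dots> \<le> (\<integral>\<^sup>+ v. ennreal (real (pa_cost \<sigma> stop v)) \<partial>measure_pmf D)"
    unfolding cp_obj_def
    by (intro nn_integral_mono cp_term_schedule_solution_le \<open>valid_order n \<sigma>\<close> \<open>valid_stop n \<sigma> stop\<close>)
  finally show "cp_obj n D x \<le> (\<integral>\<^sup>+ v. ennreal (real (pa_cost (fst (\<sigma>, stop)) (snd (\<sigma>, stop)) v)) \<partial>measure_pmf D)"
    by simp
qed

theorem theorem3p6:
  fixes n :: nat and D :: "(nat \<Rightarrow> nat) pmf" and x :: "nat \<Rightarrow> nat \<Rightarrow> real"
  assumes "n \<ge> 1"
    and "\<forall>v\<in>set_pmf D. \<forall>i<n. v i > 0 \<and> even (v i)"
    and "cp_optimal n D x"
  shows "alg_cost n D x \<le> 4 * OPT n D"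
proof -
  have "alg_cost n D x \<le> (\<integral>\<^sup>+ v. 4 * (\<Sum>t. ennreal (cp_term n x v (Suc t))) \<partial>measure_pmf D)"
    using assms(1,3) unfolding alg_cost_def cp_optimal_def
    by (intro nn_integral_mono expected_clairvoyant_cost_le) auto
  also have "\<dots> = 4 * cp_obj n D x"
    unfolding cp_obj_def by (rule nn_integral_cmult) simp
  also have "\<dots> \<le> 4 * OPT n D"
    using cp_obj_le_OPT[OF assms(3)] by (rule mult_left_mono) simp
  finally show ?thesis .
qed

end
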